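(* Let $2\le r\le n$, and let $A$ and $A+\sum_{i=1}^r\mathbf{x}_i\mathbf{x}_i^{\top}$ both lie in $\mathrm{SGL}_n(\mathbb{F}_2)$, where $\mathbf{x}_1,\ldots,\mathbf{x}_r\in\mathbb{F}_2^n$ are linearly independent and $[\mathbf{x}_i^{\top}A^{-1}\mathbf{x}_j]_{i,j=1}^r$ has rank one and trace zero. Then $d\big(A,A+\sum_{i=1}^r\mathbf{x}_i\mathbf{x}_i^{\top}\big)\ge r+2$.
   Context: $\mathrm{SGL}_n(\mathbb{F}_2)$ is the set of invertible symmetric $n\times n$ matrices over the binary field; $d$ is the graph distance in the graph $\Gamma_n$ on $\mathrm{SGL}_n(\mathbb{F}_2)$ where $A\sim B$ iff $\mathrm{rank}(A-B)=1$. *)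

theory Defs
  imports "HOL-Analysis.Analysis" "HOL-Library.Z2" "HOL-Library.Extended_Nat"
begin

definition SGL :: "(bit^'n^'n) set" where
  "SGL = {A. transpose A = A \<and> invertible A}"

definition sgl_adj :: "bit^'n^'n \<Rightarrow> bit^'n^'n \<Rightarrow> bool" where
  "sgl_adj A B \<longleftrightarrow> A \<in> SGL \<and> B \<in> SGL \<and> rank (A - B) = 1"

definition sgl_walk :: "nat \<Rightarrow> (nat \<Rightarrow> bit^'n^'n) \<Rightarrow> bit^'n^'n \<Rightarrow> bit^'n^'n \<Rightarrow> bool" where
  "sgl_walk k p A B \<longleftrightarrow> p 0 = A \<and> p k = B \<and> (\<forall>i\<le>k. p i \<in> SGL)
     \<and> (\<forall>i<k. sgl_adj (p i) (p (Suc i)))"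

text \<open>Graph distance (infinity if no path).\<close>
definition sgl_dist :: "bit^'n^'n \<Rightarrow> bit^'n^'n \<Rightarrow> enat" where
  "sgl_dist A B = (INF k \<in> {k. \<exists>p. sgl_walk k p A B}. enat k)"

definition outer :: "bit^'n \<Rightarrow> bit^'n^'n" where
  "outer x = (\<chi> a b. x $ a * x $ b)"

end

(*
  Let X be the matrix with rows x_i, so that the sum of the x_i x_i^T is X^T X. Over F_2 the
  symmetric rank-one matrices are exactly the y y^T with y <> 0, so a walk of length k from A to
  A + X^T X is A = P_0, P_1, ..., P_k with P_(j+1) = P_j + y_j y_j^T, and
  X^T X = sum_(j<k) y_j y_j^T. If k <= r + 1, comparing the column spaces of both sides puts every
  y_j into the row space of X: y_j = X^T c_j.

  Write X A^-1 X^T = g g^T with g <> 0. Over F_2, P + y y^T is invertible iff y^T P^-1 y = 0, and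
  then its inverse is P^-1 + P^-1 y y^T P^-1 (Sherman-Morrison). Induction along the walk shows
  X P_j^-1 X^T = g g^T, hence y_j^T P_j^-1 y_j = (c_j^T g)^2, so c_j^T g = 0 for every j. Then
  X^T g g^T = X^T X A^-1 X^T = sum_j X^T c_j (c_j^T g) g^T = 0, i.e. X^T g = 0, which contradicts
  the independence of the rows of X.
*)

theory Submission imports Defs begin

declare add_bit_eq_xor [simp del] mult_bit_eq_and [simp del]

lemma bit_mult_self [simp]: "(b::bit) * b = b"
  by (cases b) auto

lemma bit_add_self [simp]: "(b::bit) + b = 0"
  by (cases b) auto

lemma bit_vec_add_self [simp]: "(v::bit^'n) + v = 0"
  by (simp add: vec_eq_iff)

lemma bit_matrix_add_self [simp]: "(M::bit^'n^'m) + M = 0"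
  by (simp add: vec_eq_iff)

lemma bit_matrix_minus_commute: "(M::bit^'n^'m) - N = N - M"
  by (simp add: vec_eq_iff add.commute)

lemma matrix_add_rdistrib: "(A + B) ** C = A ** C + B ** C"
  by (simp add: matrix_matrix_mult_def vec_eq_iff distrib_right sum.distrib)

lemma transpose_diff: "transpose (A - B) = transpose A - transpose B"
  by (simp add: transpose_def vec_eq_iff)

lemma matrix_mult_sum_left:
  "finite I \<Longrightarrow> (\<Sum>j\<in>I. M j) ** N = (\<Sum>j\<in>I. M j ** N)"
  by (induction I rule: finite_induct) (auto simp: matrix_add_rdistrib)

lemma matrix_vector_mult_sum_left:
  "finite I \<Longrightarrow> (\<Sum>j\<in>I. M j) *v v = (\<Sum>j\<in>I. M j *v v)"
  by (induction I rule: finite_induct) (auto simp: matrix_vector_mult_add_rdistrib)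

lemma axis_vector_matrix_mult: "axis i 1 v* x = x $ i"
  by (simp add: vector_matrix_mult_def axis_def vec_eq_iff if_distrib if_distribR cong: if_cong)

lemma matrix_inv_mult:
  assumes "invertible A"
  shows "A ** matrix_inv A = mat 1" and "matrix_inv A ** A = mat 1"
proof -
  have "A ** matrix_inv A = mat 1 \<and> matrix_inv A ** A = mat 1"
    unfolding matrix_inv_def by (rule someI_ex) (use assms in \<open>simp add: invertible_def\<close>)
  then show "A ** matrix_inv A = mat 1" and "matrix_inv A ** A = mat 1"
    by auto
qed

lemma transpose_matrix_inv_symmetric:
  fixes A :: "'a::comm_semiring_1^'n^'n"
  assumes "invertible A" and "transpose A = A"
  shows "transpose (matrix_inv A) = matrix_inv A"
proof -
  have "transpose (matrix_inv A) ** A = mat 1"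
    by (metis assms(2) matrix_inv_mult(1)[OF assms(1)] matrix_transpose_mul transpose_mat)
  then show ?thesis
    by (metis matrix_inv_mult(1)[OF assms(1)] matrix_mul_assoc matrix_mul_lid matrix_mul_rid)
qed

lemma scalar_product_commute:
  fixes u v :: "'a::comm_semiring_1^'n"
  shows "scalar_product u v = scalar_product v u"
  by (simp add: scalar_product_def mult.commute)

lemma scalar_product_scale_right:
  fixes u v :: "'a::comm_semiring_1^'n"
  shows "scalar_product u (c *s v) = c * scalar_product u v"
  by (simp add: scalar_product_def sum_distrib_left mult.left_commute)

lemma scalar_product_vector_matrix_mult:
  "scalar_product (u v* M) v = scalar_product u (M *v v)"
proof -
  have "(\<Sum>j\<in>UNIV. (\<Sum>i\<in>UNIV. u$i * M$i$j) * v$j) = (\<Sum>j\<in>UNIV. \<Sum>i\<in>UNIV. u$i * M$i$j * v$j)"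
    by (simp add: sum_distrib_right)
  also have "\<dots> = (\<Sum>i\<in>UNIV. \<Sum>j\<in>UNIV. u$i * M$i$j * v$j)"
    by (rule sum.swap)
  also have "\<dots> = (\<Sum>i\<in>UNIV. u$i * (\<Sum>j\<in>UNIV. M$i$j * v$j))"
    by (simp add: sum_distrib_left mult.assoc)
  finally show ?thesis
    by (simp add: scalar_product_def matrix_vector_mult_def vector_matrix_mult_def)
qed

lemma matrix_vector_mult_component_scalar_product: "(M *v v) $ i = scalar_product (M $ i) v"
  by (simp add: scalar_product_def matrix_vector_mult_def)

lemma scalar_product_axis: "scalar_product v (axis i 1) = v $ i"
  by (simp add: scalar_product_def axis_def if_distrib if_distribR cong: if_cong)

lemma outer_matrix_vector_mult: "outer u *v v = scalar_product u v *s u"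
  by (simp add: outer_def matrix_vector_mult_def scalar_product_def vec_eq_iff
      sum_distrib_left sum_distrib_right mult_ac)

lemma sum_outer_rows: "(\<Sum>i\<in>UNIV. outer (x $ i)) = transpose x ** x"
  by (simp add: outer_def transpose_def matrix_matrix_mult_def vec_eq_iff sum_component)

lemma outer_sum_matrix_vector_mult:
  "finite I \<Longrightarrow> (\<Sum>j\<in>I. outer (z j)) *v v = (\<Sum>j\<in>I. scalar_product (z j) v *s z j)"
  by (simp add: matrix_vector_mult_sum_left outer_matrix_vector_mult)

lemma outer_vector_matrix_mult: "outer (c v* x) = transpose x ** outer c ** x"
  by (simp add: matrix_eq outer_matrix_vector_mult scalar_product_vector_matrix_mult
      scalar_vector_matrix_assoc flip: matrix_vector_mul_assoc)

lemma outer_mult_outer_eq_0: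
  assumes "scalar_product u v = 0"
  shows "outer u ** outer v = 0"
  by (simp add: matrix_eq outer_matrix_vector_mult scalar_product_scale_right assms
      flip: matrix_vector_mul_assoc)

lemma outer_mult_outer_self_eq_0:
  assumes "scalar_product u (M *v u) = 0"
  shows "outer u ** M ** outer u = 0"
  by (simp add: matrix_eq outer_matrix_vector_mult scalar_product_scale_right assms
      vector_scalar_commute flip: matrix_vector_mul_assoc)

lemma symmetric_rank_one_eq_outer:
  fixes M :: "bit^'n^'n"
  assumes sym: "transpose M = M" and rk: "rank M = 1"
  obtains v where "v \<noteq> 0" and "M = outer v"
proof -
  obtain B where B: "B \<subseteq> rows M" "vec.independent B" "rows M \<subseteq> vec.span B" "card B = 1"
    using vec.basis_exists[of "rows M"] rk unfolding row_rank_def_gen by metis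
  then obtain v where Bv: "B = {v}"
    by (meson card_1_singletonE)
  have "v \<noteq> 0"
    using B(2) Bv vec.dependent_zero by blast
  have "\<exists>c. row i M = c *s v" for i
  proof -
    have "row i M \<in> vec.span {v}"
      using B(3) Bv unfolding rows_def by blast
    then show ?thesis
      unfolding vec.span_singleton by blast
  qed
  then obtain c where c: "\<And>i. row i M = c i *s v"
    by metis
  have M_entry: "M $ i $ l = c i * v $ l" for i l
    using arg_cong[OF c[of i], of "\<lambda>w. w $ l"] by (simp add: row_def)
  obtain j where j: "v $ j = 1"
    using \<open>v \<noteq> 0\<close> by (auto simp: vec_eq_iff)
  have c_eq: "c i = c j * v $ i" for i
  proof -
    have "c i = M $ i $ j"
      by (simp add: M_entry j)
    also have "\<dots> = M $ j $ i"
      using sym by (metis transpose_def vec_lambda_beta)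
    finally show ?thesis
      by (simp add: M_entry)
  qed
  have M_entry': "M $ i $ l = c j * v $ i * v $ l" for i l
    by (simp add: M_entry c_eq[of i])
  have "c j \<noteq> 0"
  proof
    assume "c j = 0"
    then have "M = 0"
      by (simp add: vec_eq_iff M_entry')
    then have "rows M = {0}"
      by (auto simp: rows_def row_def vec_eq_iff)
    then show False
      using B(1) Bv \<open>v \<noteq> 0\<close> by auto
  qed
  then have "M = outer v"
    by (simp add: outer_def vec_eq_iff M_entry')
  with \<open>v \<noteq> 0\<close> show thesis
    by (rule that)
qed

lemma span_rows_subset_range_vector_matrix_mult:
  fixes x :: "'a::field^'n^'m"
  shows "vec.span (range (\<lambda>i. x $ i)) \<subseteq> range (\<lambda>c. c v* x)"
proof (rule vec.span_minimal)
  show "range (\<lambda>i. x $ i) \<subseteq> range (\<lambda>c. c v* x)"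
    by (metis axis_vector_matrix_mult image_subsetI rangeI)
  have "vec.subspace (range ((*v) (transpose x)))"
    by (rule vec.linear_subspace_image[OF matrix_vector_mul_linear_gen vec.subspace_UNIV])
  then show "vec.subspace (range (\<lambda>c. c v* x))"
    by simp
qed

lemma independent_rows_vector_matrix_mult_eq_0:
  fixes x :: "'a::field^'n^'m"
  assumes inj: "inj (\<lambda>i. x $ i)" and ind: "vec.independent (range (\<lambda>i. x $ i))"
    and "a v* x = 0"
  shows "a = 0"
proof -
  define u where "u v = a $ inv (\<lambda>i. x $ i) v" for v
  have "(\<Sum>v\<in>range (\<lambda>i. x $ i). u v *s v) = (\<Sum>i\<in>UNIV. u (x $ i) *s x $ i)"
    by (subst sum.reindex[OF inj]) simp
  also have "\<dots> = a v* x"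
    by (simp add: u_def inv_f_f[OF inj] vector_matrix_mult_def vec_eq_iff sum_component)
  finally have "u (x $ i) = 0" for i
    using vec.independentD[OF ind, of "range (\<lambda>i. x $ i)" u "x $ i"] \<open>a v* x = 0\<close> by simp
  then show ?thesis
    by (simp add: u_def inv_f_f[OF inj] vec_eq_iff)
qed

lemma independent_scalar_product_interpolation:
  fixes S :: "('a::field^'n) set"
  assumes "vec.independent S"
  obtains f where "\<And>v. v \<in> S \<Longrightarrow> scalar_product v f = h v"
proof -
  obtain g :: "'a^'n \<Rightarrow> 'a^'n" where g: "Vector_Spaces.linear (*s) (*s) g" "\<And>v. v \<in> S \<Longrightarrow> g v = (\<chi> j. h v)"
    using vec.linear_independent_extend[OF assms, of "\<lambda>v. \<chi> j. h v"] by blast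
  fix j :: 'n \<comment> \<open>every row of the matrix of \<open>g\<close> does the job\<close>
  have "scalar_product v (matrix g $ j) = h v" if "v \<in> S" for v
  proof -
    have "scalar_product v (matrix g $ j) = (matrix g *v v) $ j"
      by (simp add: matrix_vector_mult_component_scalar_product scalar_product_commute)
    also have "\<dots> = h v"
      by (simp add: matrix_works[OF g(1)] g(2)[OF that])
    finally show ?thesis .
  qed
  then show thesis
    by (rule that)
qed

lemma range_outer_sum_subset_span:
  assumes "finite I"
  shows "range ((*v) (\<Sum>j\<in>I. outer (z j))) \<subseteq> vec.span (z ` I)"
proof -
  have "(\<Sum>j\<in>I. outer (z j)) *v v \<in> vec.span (z ` I)" for v
    unfolding outer_sum_matrix_vector_mult[OF assms]
    by (intro vec.span_sum vec.span_scale vec.span_base) auto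
  then show ?thesis
    by auto
qed

lemma independent_subset_range_outer_sum:
  assumes "finite I" and inj: "inj_on z I" and ind: "vec.independent (z ` I)"
  shows "z ` I \<subseteq> range ((*v) (\<Sum>j\<in>I. outer (z j)))"
proof (rule image_subsetI)
  fix i assume "i \<in> I"
  obtain f where f: "\<And>v. v \<in> z ` I \<Longrightarrow> scalar_product v f = (if v = z i then 1 else 0)"
    using independent_scalar_product_interpolation[OF ind, of "\<lambda>v. if v = z i then 1 else 0"]
    by blast
  have "(\<Sum>j\<in>I. outer (z j)) *v f = (\<Sum>j\<in>I. (if j = i then 1 else 0) *s z j)"
    using \<open>finite I\<close> \<open>i \<in> I\<close> by (auto simp: outer_sum_matrix_vector_mult f inj_on_eq_iff[OF inj]
        intro!: sum.cong)
  also have "\<dots> = z i"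
    using \<open>finite I\<close> \<open>i \<in> I\<close> by (simp add: if_distrib if_distribR sum.delta cong: if_cong)
  finally show "z i \<in> range ((*v) (\<Sum>j\<in>I. outer (z j)))"
    by (metis rangeI)
qed

text \<open>The \<open>x\<^sub>i\<close> lie in the column space of the common sum, hence in the span of the \<open>y\<^sub>j\<close>.
  If some \<open>y\<^sub>j\<close> lay outside the span of the \<open>x\<^sub>i\<close>, the at most \<open>card I + 1\<close> vectors \<open>y\<^sub>j\<close>
  would be independent, and the same argument with the roles exchanged gives a contradiction.\<close>

lemma outer_sum_eq_imp_subset_span:
  fixes x y :: "_ \<Rightarrow> bit^'n"
  assumes I: "finite I" and J: "finite J" and inj: "inj_on x I" and ind: "vec.independent (x ` I)"
    and card: "card J \<le> card I + 1"
    and eq: "(\<Sum>i\<in>I. outer (x i)) = (\<Sum>j\<in>J. outer (y j))"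
  shows "y ` J \<subseteq> vec.span (x ` I)"
proof (rule ccontr)
  assume not_sub: "\<not> y ` J \<subseteq> vec.span (x ` I)"
  have "x ` I \<subseteq> range ((*v) (\<Sum>i\<in>I. outer (x i)))"
    by (rule independent_subset_range_outer_sum[OF I inj ind])
  also have "\<dots> \<subseteq> vec.span (y ` J)"
    unfolding eq by (rule range_outer_sum_subset_span[OF J])
  finally have x_sub: "x ` I \<subseteq> vec.span (y ` J)" .
  have "\<not> vec.dim (y ` J) \<le> vec.dim (x ` I)"
  proof
    assume "vec.dim (y ` J) \<le> vec.dim (x ` I)"
    then have "vec.span (x ` I) = vec.span (y ` J)"
      using vec.dim_eq_span[OF x_sub] by simp
    then show False
      using not_sub vec.span_superset[of "y ` J"] by simp
  qed
  moreover have "vec.dim (x ` I) = card I"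
    using vec.dim_eq_card_independent[OF ind] card_image[OF inj] by simp
  moreover have "vec.dim (y ` J) \<le> card (y ` J)"
    using J by (simp add: vec.dim_le_card')
  moreover have "card (y ` J) \<le> card J"
    using J by (rule card_image_le)
  ultimately have "card (y ` J) = card J" and dim_Y: "card (y ` J) \<le> vec.dim (y ` J)"
    using card by linarith+
  then have inj_y: "inj_on y J"
    using J by (simp add: inj_on_iff_eq_card)
  have ind_y: "vec.independent (y ` J)"
    using vec.card_le_dim_spanning[OF subset_refl vec.span_superset finite_imageI[OF J] dim_Y] .
  have "y ` J \<subseteq> range ((*v) (\<Sum>j\<in>J. outer (y j)))"
    by (rule independent_subset_range_outer_sum[OF J inj_y ind_y])
  also have "\<dots> \<subseteq> vec.span (x ` I)"
    unfolding eq[symmetric] by (rule range_outer_sum_subset_span[OF I])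
  finally show False
    using not_sub by blast
qed

lemma outer_sum_rows_eq_imp_row_combinations:
  fixes x :: "bit^'n^'r"
  assumes inj: "inj (\<lambda>i. x $ i)" and ind: "vec.independent (range (\<lambda>i. x $ i))"
    and "k \<le> CARD('r) + 1" and "(\<Sum>i\<in>UNIV. outer (x $ i)) = (\<Sum>j<k. outer (y j))"
  obtains c where "\<And>j. j < k \<Longrightarrow> y j = c j v* x"
proof -
  have "y ` {..<k} \<subseteq> vec.span (range (\<lambda>i. x $ i))"
    using outer_sum_eq_imp_subset_span[of UNIV "{..<k}" "\<lambda>i. x $ i" y] inj ind assms(3,4)
    by simp
  then have "\<forall>j<k. \<exists>c. y j = c v* x"
    using span_rows_subset_range_vector_matrix_mult[of x] by blast
  then obtain c where "\<And>j. j < k \<Longrightarrow> y j = c j v* x"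
    by metis
  with that show thesis .
qed

lemma rank_one_update_invertible_imp_form_eq_0:
  fixes P C :: "bit^'n^'n"
  assumes PC: "P ** C = mat 1" and inv: "invertible (P + outer y)"
  shows "scalar_product y (C *v y) = 0"
proof (rule ccontr)
  assume "scalar_product y (C *v y) \<noteq> 0"
  moreover have "P *v (C *v y) = y"
    by (simp add: matrix_vector_mul_assoc PC)
  ultimately have "(P + outer y) *v (C *v y) = 0"
    by (simp add: matrix_vector_mult_add_rdistrib outer_matrix_vector_mult)
  then have "C *v y = 0"
    using inj_matrix_vector_mult[OF inv] by (metis injD matrix_vector_mult_0_right)
  then have "y = 0"
    by (metis PC matrix_vector_mul_assoc matrix_vector_mul_lid matrix_vector_mult_0_right)
  with \<open>scalar_product y (C *v y) \<noteq> 0\<close> show False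
    by (simp add: scalar_product_def)
qed

lemma rank_one_update_inverse:
  fixes P C :: "bit^'n^'n"
  assumes PC: "P ** C = mat 1" and "scalar_product y (C *v y) = 0"
  shows "(P + outer y) ** (C + C ** outer y ** C) = mat 1"
proof -
  have "(P + outer y) ** (C + C ** outer y ** C)
      = P ** C + (P ** C) ** outer y ** C + outer y ** C + (outer y ** C ** outer y) ** C"
    by (simp add: matrix_add_ldistrib matrix_add_rdistrib matrix_mul_assoc add.assoc)
  also have "\<dots> = mat 1"
    using outer_mult_outer_self_eq_0[OF assms(2)] by (simp add: PC add.assoc)
  finally show ?thesis .
qed

lemma rank_one_form_update:
  fixes P C :: "bit^'n^'n" and x :: "bit^'n^'r"
  assumes PC: "P ** C = mat 1" and inv: "invertible (P + outer (c v* x))"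
    and form: "x ** C ** transpose x = outer g"
  shows "scalar_product g c = 0"
    and "(P + outer (c v* x)) ** (C + C ** outer (c v* x) ** C) = mat 1"
    and "x ** (C + C ** outer (c v* x) ** C) ** transpose x = outer g"
proof -
  have "scalar_product (c v* x) (C *v (c v* x)) = scalar_product c ((x ** C ** transpose x) *v c)"
    by (simp add: scalar_product_vector_matrix_mult flip: matrix_vector_mul_assoc)
  also have "\<dots> = scalar_product g c"
    by (simp add: form outer_matrix_vector_mult scalar_product_scale_right scalar_product_commute)
  finally have s: "scalar_product (c v* x) (C *v (c v* x)) = scalar_product g c" .
  then show "scalar_product g c = 0"
    using rank_one_update_invertible_imp_form_eq_0[OF PC inv] by simp
  then show "(P + outer (c v* x)) ** (C + C ** outer (c v* x) ** C) = mat 1"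
    using rank_one_update_inverse[OF PC] s by simp
  have "x ** (C + C ** outer (c v* x) ** C) ** transpose x
      = x ** C ** transpose x + (x ** C ** transpose x) ** outer c ** (x ** C ** transpose x)"
    by (simp add: outer_vector_matrix_mult matrix_add_ldistrib matrix_add_rdistrib matrix_mul_assoc)
  also have "\<dots> = outer g"
    using outer_mult_outer_self_eq_0[of g "outer c"] \<open>scalar_product g c = 0\<close>
    by (simp add: form outer_matrix_vector_mult scalar_product_scale_right)
  finally show "x ** (C + C ** outer (c v* x) ** C) ** transpose x = outer g" .
qed

lemma rank_one_updates_orthogonal:
  fixes p :: "nat \<Rightarrow> bit^'n^'n" and x :: "bit^'n^'r"
  assumes "\<And>j. j < k \<Longrightarrow> p (Suc j) = p j + outer (c j v* x)"
    and "\<And>j. j \<le> k \<Longrightarrow> invertible (p j)"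
    and "p 0 ** C = mat 1" and "x ** C ** transpose x = outer g"
    and "j < k"
  shows "scalar_product g (c j) = 0"
  using assms
proof (induction k arbitrary: p c C j)
  case 0
  then show ?case
    by simp
next
  case (Suc k)
  have "invertible (p 0 + outer (c 0 v* x))"
    using Suc.prems(1)[of 0] Suc.prems(2)[of 1] by simp
  note update = rank_one_form_update[OF Suc.prems(3) this Suc.prems(4)]
  have "scalar_product g (c (Suc i)) = 0" if "i < k" for i
  proof (rule Suc.IH[of "\<lambda>j. p (Suc j)" "\<lambda>j. c (Suc j)"])
    show "p (Suc (Suc j)) = p (Suc j) + outer (c (Suc j) v* x)" if "j < k" for j
      using Suc.prems(1) that by simp
    show "invertible (p (Suc j))" if "j \<le> k" for j
      using Suc.prems(2) that by simp
    show "p (Suc 0) ** (C + C ** outer (c 0 v* x) ** C) = mat 1"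
      using update(2) Suc.prems(1)[of 0] by simp
  qed (use update(3) that in auto)
  with update(1) \<open>j < Suc k\<close> show ?case
    by (cases j) auto
qed

lemma outer_sum_orthogonal_imp_vector_matrix_mult_eq_0:
  fixes x :: "bit^'n^'r" and C :: "bit^'n^'n"
  assumes form: "x ** C ** transpose x = outer g"
    and J: "finite J" and sum: "transpose x ** x = (\<Sum>j\<in>J. outer (c j v* x))"
    and orth: "\<And>j. j \<in> J \<Longrightarrow> scalar_product g (c j) = 0"
  shows "g v* x = 0"
proof -
  have "transpose x ** outer g = (transpose x ** x) ** C ** transpose x"
    by (metis form matrix_mul_assoc)
  also have "\<dots> = (\<Sum>j\<in>J. transpose x ** outer (c j) ** (x ** C ** transpose x))"
    by (simp add: sum matrix_mult_sum_left[OF J] outer_vector_matrix_mult matrix_mul_assoc)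
  also have "\<dots> = (\<Sum>j\<in>J. transpose x ** (outer (c j) ** outer g))"
    by (simp add: form matrix_mul_assoc)
  also have "\<dots> = 0"
    by (simp add: orth scalar_product_commute outer_mult_outer_eq_0)
  finally have "transpose x ** outer g = 0" .
  show "g v* x = 0"
  proof (cases "g = 0")
    case False
    then obtain i where "g $ i = 1"
      by (auto simp: vec_eq_iff)
    then have "(transpose x ** outer g) *v axis i 1 = g v* x"
      by (simp add: outer_matrix_vector_mult scalar_product_axis flip: matrix_vector_mul_assoc)
    with \<open>transpose x ** outer g = 0\<close> show ?thesis
      by simp
  qed simp
qed

lemma sgl_walk_rank_one_steps:
  fixes p :: "nat \<Rightarrow> bit^'n^'n"
  assumes walk: "sgl_walk k p A B"
  obtains y where "\<And>j. j < k \<Longrightarrow> p (Suc j) = p j + outer (y j)"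
    and "B = A + (\<Sum>j<k. outer (y j))"
proof -
  have "\<exists>v. p (Suc j) = p j + outer v" if "j < k" for j
  proof -
    let ?D = "p (Suc j) - p j"
    have adj: "sgl_adj (p j) (p (Suc j))"
      using walk that by (simp add: sgl_walk_def)
    then have "transpose ?D = ?D"
      by (simp add: sgl_adj_def SGL_def transpose_diff)
    moreover have "rank ?D = 1"
      using adj by (simp add: sgl_adj_def bit_matrix_minus_commute[of "p (Suc j)"])
    ultimately obtain v where "?D = outer v"
      by (rule symmetric_rank_one_eq_outer)
    then show ?thesis
      by (metis add.commute diff_add_cancel)
  qed
  then obtain y where y: "\<And>j. j < k \<Longrightarrow> p (Suc j) = p j + outer (y j)"
    by metis
  have "p m = A + (\<Sum>j<m. outer (y j))" if "m \<le> k" for m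
    using that
  proof (induction m)
    case 0
    then show ?case
      using walk by (simp add: sgl_walk_def)
  next
    case (Suc m)
    then show ?case
      by (simp add: y add.assoc)
  qed
  then have "B = A + (\<Sum>j<k. outer (y j))"
    using walk by (simp add: sgl_walk_def)
  with y show thesis
    by (rule that)
qed

lemma sgl_walk_length_ge:
  fixes A :: "bit^'n^'n" and x :: "bit^'n^'r"
  assumes A: "A \<in> SGL"
    and inj: "inj (\<lambda>i. x $ i)" and ind: "vec.independent (range (\<lambda>i. x $ i))"
    and rk: "rank (x ** matrix_inv A ** transpose x) = 1"
    and walk: "sgl_walk k p A (A + (\<Sum>i\<in>UNIV. outer (x $ i)))"
  shows "CARD('r) + 2 \<le> k"
proof (rule ccontr)
  assume "\<not> CARD('r) + 2 \<le> k"
  obtain y where steps: "\<And>j. j < k \<Longrightarrow> p (Suc j) = p j + outer (y j)"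
    and "A + (\<Sum>i\<in>UNIV. outer (x $ i)) = A + (\<Sum>j<k. outer (y j))"
    using sgl_walk_rank_one_steps[OF walk] by blast
  then have sum_eq: "(\<Sum>i\<in>UNIV. outer (x $ i)) = (\<Sum>j<k. outer (y j))"
    by simp
  moreover have "k \<le> CARD('r) + 1"
    using \<open>\<not> CARD('r) + 2 \<le> k\<close> by simp
  ultimately obtain c where c: "\<And>j. j < k \<Longrightarrow> y j = c j v* x"
    using outer_sum_rows_eq_imp_row_combinations[OF inj ind] by blast
  define C where "C = matrix_inv A"
  have invA: "invertible A" and symA: "transpose A = A"
    using A by (auto simp: SGL_def)
  have "transpose (x ** C ** transpose x) = x ** C ** transpose x"
    by (simp add: C_def matrix_transpose_mul matrix_mul_assoc transpose_matrix_inv_symmetric[OF invA symA])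
  then obtain g where "g \<noteq> 0" and form: "x ** C ** transpose x = outer g"
    using symmetric_rank_one_eq_outer rk unfolding C_def by metis
  have "scalar_product g (c j) = 0" if "j < k" for j
  proof (rule rank_one_updates_orthogonal[OF _ _ _ form that])
    show "p (Suc j) = p j + outer (c j v* x)" if "j < k" for j
      using steps c that by simp
    show "invertible (p j)" if "j \<le> k" for j
      using walk that by (simp add: sgl_walk_def SGL_def)
    show "p 0 ** C = mat 1"
      using walk matrix_inv_mult(1)[OF invA] by (simp add: sgl_walk_def C_def)
  qed
  moreover have "transpose x ** x = (\<Sum>j<k. outer (c j v* x))"
    using sum_eq c by (simp add: sum_outer_rows)
  ultimately have "g v* x = 0"
    using outer_sum_orthogonal_imp_vector_matrix_mult_eq_0[OF form, of "{..<k}" c] by simp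
  with \<open>g \<noteq> 0\<close> show False
    using independent_rows_vector_matrix_mult_eq_0[OF inj ind] by blast
qed

theorem lemma4p7:
  fixes A :: "bit^'n^'n" and x :: "bit^'n^'r"
  assumes "2 \<le> CARD('r)" and "CARD('r) \<le> CARD('n)"
    and "A \<in> SGL"
    and "A + (\<Sum>i\<in>UNIV. outer (x $ i)) \<in> SGL"
    and "inj (\<lambda>i. x $ i)" and "vec.independent (range (\<lambda>i. x $ i))"
    and "rank (x ** matrix_inv A ** transpose x) = 1"
    and "trace (x ** matrix_inv A ** transpose x) = 0"
  shows "sgl_dist A (A + (\<Sum>i\<in>UNIV. outer (x $ i))) \<ge> enat (CARD('r) + 2)"
  unfolding sgl_dist_def
proof (rule INF_greatest)
  fix k
  assume "k \<in> {k. \<exists>p. sgl_walk k p A (A + (\<Sum>i\<in>UNIV. outer (x $ i)))}"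
  then show "enat (CARD('r) + 2) \<le> enat k"
    using sgl_walk_length_ge assms(3,5,6,7) by auto
qed

end
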